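(* Let $S\subseteq\mathbb{N}^d$ be a Frobenius GNS with Frobenius gap $F(S)$. Then $$\frac{g(S)}{\|F(S)\|-g(S)}\le t(S).$$
   Context: $\mathbb{N}=\{0,1,2,\dots\}$. A GNS is a submonoid $S\subseteq\mathbb{N}^d$ with finite complement $\mathcal{H}(S)=\mathbb{N}^d\setminus S$ (gaps); $g(S)=|\mathcal{H}(S)|$. A Frobenius GNS is a GNS such that $\mathcal{H}(S)$ has a unique maximal element $F(S)$ for the natural partial order ($x\le y$ iff $x^{(i)}\le y^{(i)}$ for all $i$). A gap $P$ is pseudo-Frobenius if $P+s\in S$ for all nonzero $s\in S$; $t(S)$ is the number of pseudo-Frobenius gaps. For $F\in\mathbb{N}^d$, $\|F\|=\prod_{i=1}^d(F^{(i)}+1)$. *)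

theory Defs
  imports Complex_Main "HOL-Library.Function_Algebras"
begin

text \<open>Points of N^d are functions 'd \<Rightarrow> nat with 'd a finite index type
  (CARD('d) = d). Addition is pointwise (Function_Algebras) and the order
  le_fun is the natural componentwise partial order.\<close>

definition GNS :: "('d::finite \<Rightarrow> nat) set \<Rightarrow> bool" where
  "GNS S \<longleftrightarrow> 0 \<in> S \<and> (\<forall>x\<in>S. \<forall>y\<in>S. x + y \<in> S) \<and> finite (UNIV - S)"

definition gaps :: "('d::finite \<Rightarrow> nat) set \<Rightarrow> ('d \<Rightarrow> nat) set" where
  "gaps S = UNIV - S"

definition genus :: "('d::finite \<Rightarrow> nat) set \<Rightarrow> nat" where
  "genus S = card (gaps S)"

definition maximal_gaps :: "('d::finite \<Rightarrow> nat) set \<Rightarrow> ('d \<Rightarrow> nat) set" where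
  "maximal_gaps S = {h \<in> gaps S. \<forall>h'\<in>gaps S. h \<le> h' \<longrightarrow> h' = h}"

definition Frobenius_GNS :: "('d::finite \<Rightarrow> nat) set \<Rightarrow> ('d \<Rightarrow> nat) \<Rightarrow> bool" where
  "Frobenius_GNS S F \<longleftrightarrow> GNS S \<and> maximal_gaps S = {F}"

definition pseudo_frobenius :: "('d::finite \<Rightarrow> nat) set \<Rightarrow> ('d \<Rightarrow> nat) set" where
  "pseudo_frobenius S = {P \<in> gaps S. \<forall>s\<in>S. s \<noteq> 0 \<longrightarrow> P + s \<in> S}"

definition type_GNS :: "('d::finite \<Rightarrow> nat) set \<Rightarrow> nat" where
  "type_GNS S = card (pseudo_frobenius S)"

definition box_norm :: "('d::finite \<Rightarrow> nat) \<Rightarrow> nat" where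
  "box_norm F = (\<Prod>i\<in>UNIV. F i + 1)"

end

theory Submission
  imports Defs "HOL-Library.FuncSet"
begin

text \<open>Every gap h can be pushed inside S-translates until it becomes pseudo-Frobenius:
  a maximal gap of the form h + s is one. Hence each gap is P - s with P pseudo-Frobenius
  and s an element of S below F, which gives g(S) \<le> t(S) |S \<inter> [0,F]|, while the box
  [0,F] splits into the gaps and S \<inter> [0,F], so |S \<inter> [0,F]| = \<parallel>F\<parallel> - g(S) > 0.\<close>

lemma atMost_fun_eq_PiE:
  fixes F :: "'d::finite \<Rightarrow> nat"
  shows "{..F} = PiE UNIV (\<lambda>i. {..F i})"
  by (auto simp: atMost_def le_fun_def PiE_UNIV_domain)

lemma finite_atMost_fun:
  fixes F :: "'d::finite \<Rightarrow> nat"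
  shows "finite {..F}"
  by (simp add: atMost_fun_eq_PiE finite_PiE)

lemma card_atMost_fun:
  fixes F :: "'d::finite \<Rightarrow> nat"
  shows "card {..F} = box_norm F"
  by (simp add: atMost_fun_eq_PiE card_PiE box_norm_def)

lemma finite_gaps:
  assumes "GNS S"
  shows "finite (gaps S)"
  using assms by (simp add: GNS_def gaps_def)

lemma pseudo_frobenius_subset_gaps: "pseudo_frobenius S \<subseteq> gaps S"
  by (auto simp: pseudo_frobenius_def)

lemma Frobenius_GNS_gaps_subset:
  assumes "Frobenius_GNS S F"
  shows "gaps S \<subseteq> {..F}"
proof
  fix h assume h: "h \<in> gaps S"
  have "finite (gaps S)"
    using assms by (simp add: Frobenius_GNS_def finite_gaps)
  then obtain m where m: "m \<in> gaps S" "h \<le> m" "\<forall>b\<in>gaps S. m \<le> b \<longrightarrow> m = b"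
    using finite_has_maximal2[OF _ h] by blast
  then have "m \<in> maximal_gaps S"
    by (auto simp: maximal_gaps_def)
  then have "m = F"
    using assms by (simp add: Frobenius_GNS_def)
  with m show "h \<in> {..F}" by simp
qed

lemma GNS_gap_shift_pseudo_frobenius:
  assumes "GNS S" "h \<in> gaps S"
  obtains s where "s \<in> S" "h + s \<in> pseudo_frobenius S"
proof -
  define A where "A = {x \<in> gaps S. \<exists>s\<in>S. x = h + s}"
  have "finite A"
    using finite_gaps[OF assms(1)] by (rule finite_subset[rotated]) (auto simp: A_def)
  moreover have "h \<in> A"
    using assms by (auto simp: A_def GNS_def intro!: bexI[of _ 0])
  ultimately obtain m where m: "m \<in> A" "\<forall>b\<in>A. m \<le> b \<longrightarrow> m = b"
    using finite_has_maximal2 by metis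
  obtain s where s: "s \<in> S" "m = h + s"
    using m(1) by (auto simp: A_def)
  have "m \<in> pseudo_frobenius S"
    unfolding pseudo_frobenius_def
  proof (intro CollectI conjI ballI impI)
    show "m \<in> gaps S" using m(1) by (simp add: A_def)
    fix s' assume s': "s' \<in> S" "s' \<noteq> 0"
    show "m + s' \<in> S"
    proof (rule ccontr)
      assume "m + s' \<notin> S"
      moreover have "s + s' \<in> S" using assms(1) s s' by (simp add: GNS_def)
      ultimately have "m + s' \<in> A" using s by (auto simp: A_def gaps_def add.assoc)
      moreover have "m \<le> m + s'" by (simp add: le_fun_def)
      ultimately have "m + s' = m" using m(2) by auto
      then show False using s' by (auto simp: fun_eq_iff)
    qed
  qed
  with s that show ?thesis by blast
qed

lemma genus_le_type_mult_card:
  assumes "GNS S" "gaps S \<subseteq> {..F}"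
  shows "genus S \<le> type_GNS S * card (S \<inter> {..F})"
proof -
  let ?N = "S \<inter> {..F}"
  let ?PF = "pseudo_frobenius S"
  have fin_PF: "finite ?PF"
    using finite_gaps[OF assms(1)] pseudo_frobenius_subset_gaps by (rule finite_subset[rotated])
  have fin_N: "finite ?N"
    using finite_atMost_fun by blast
  have cover: "gaps S \<subseteq> (\<Union>P\<in>?PF. (\<lambda>s. P - s) ` ?N)"
  proof
    fix h assume h: "h \<in> gaps S"
    then obtain s where s: "s \<in> S" "h + s \<in> ?PF"
      using GNS_gap_shift_pseudo_frobenius[OF assms(1)] by blast
    then have "h + s \<le> F"
      using assms(2) pseudo_frobenius_subset_gaps by blast
    moreover have "s \<le> h + s"
      by (simp add: le_fun_def)
    ultimately have "s \<in> ?N"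
      using s(1) by auto
    moreover have "h = (h + s) - s"
      by (simp add: fun_eq_iff)
    ultimately show "h \<in> (\<Union>P\<in>?PF. (\<lambda>s. P - s) ` ?N)"
      using s(2) by blast
  qed
  have "genus S \<le> card (\<Union>P\<in>?PF. (\<lambda>s. P - s) ` ?N)"
    unfolding genus_def using cover fin_PF fin_N by (intro card_mono) auto
  also have "\<dots> \<le> (\<Sum>P\<in>?PF. card ((\<lambda>s. P - s) ` ?N))"
    using fin_PF by (rule card_UN_le)
  also have "\<dots> \<le> (\<Sum>P\<in>?PF. card ?N)"
    by (intro sum_mono card_image_le fin_N)
  finally show ?thesis
    by (simp add: type_GNS_def)
qed

lemma box_norm_eq_genus_plus_card:
  assumes "GNS S" "gaps S \<subseteq> {..F}"
  shows "box_norm F = genus S + card (S \<inter> {..F})"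
proof -
  have "{..F} = gaps S \<union> (S \<inter> {..F})" "gaps S \<inter> (S \<inter> {..F}) = {}"
    using assms(2) by (auto simp: gaps_def)
  then have "card {..F} = card (gaps S) + card (S \<inter> {..F})"
    using finite_gaps[OF assms(1)] finite_atMost_fun[of F] by (metis card_Un_disjoint finite_Int)
  then show ?thesis
    by (simp add: card_atMost_fun genus_def)
qed

theorem theorem4p2:
  fixes S :: "('d::finite \<Rightarrow> nat) set" and F :: "'d \<Rightarrow> nat"
  assumes "Frobenius_GNS S F"
  shows "real (genus S) / (real (box_norm F) - real (genus S)) \<le> real (type_GNS S)"
proof -
  let ?N = "S \<inter> {..F}"
  have S: "GNS S" and gaps: "gaps S \<subseteq> {..F}"
    using assms Frobenius_GNS_gaps_subset by (auto simp: Frobenius_GNS_def)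
  have "0 \<in> ?N"
    using S by (simp add: GNS_def le_fun_def)
  then have N_pos: "card ?N > 0"
    using finite_atMost_fun[of F] by (auto simp: card_gt_0_iff)
  have "real (box_norm F) - real (genus S) = real (card ?N)"
    using box_norm_eq_genus_plus_card[OF S gaps] by simp
  moreover have "real (genus S) \<le> real (type_GNS S) * real (card ?N)"
    using genus_le_type_mult_card[OF S gaps] of_nat_mono by fastforce
  ultimately show ?thesis
    using N_pos by (simp add: divide_le_eq)
qed

end
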